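(* Let $R$ be a ring and let $A$, $B$, $C'$ be matrices over $R$ of sizes $p\times q$, $q\times r$ and $p\times r$, respectively. Suppose that $C'$ differs from the matrix product $C=A\times B$ in exactly one entry. Then there is a deterministic algorithm that, given $A$, $B$, $C'$, identifies this entry and corrects it (i.e., outputs $C$) in $O(pq+qr+pr)$ time, that is, in time linear in the total number of entries of the three matrices.
   Context: Running time is measured in a unit-cost model in which each ring operation (addition, subtraction, multiplication) and each elementary comparison or index operation costs $O(1)$. *)

theory Defs
  imports Main
begin

text \<open>
Matrices of size m x n over a ring are represented as functions nat => nat => 'a,
only the entries with indices i < m, j < n being meaningful.
The algorithm is written in an explicit cost-annotated style: every computation
returns a pair (value, number of unit-cost operations used).  Each entry access,
ring operation, comparison and loop/index step is charged at least 1.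
\<close>

definition mat_mult :: "nat \<Rightarrow> (nat \<Rightarrow> nat \<Rightarrow> 'a::ring) \<Rightarrow> (nat \<Rightarrow> nat \<Rightarrow> 'a) \<Rightarrow> nat \<Rightarrow> nat \<Rightarrow> 'a" where
  "mat_mult q A B i j = (\<Sum>k<q. A i k * B k j)"

fun sumc :: "nat \<Rightarrow> (nat \<Rightarrow> 'a::ring \<times> nat) \<Rightarrow> 'a \<times> nat" where
  "sumc 0 f = (0, 1)"
| "sumc (Suc n) f = (let (s, c1) = sumc n f; (x, c2) = f n in (s + x, c1 + c2 + 1))"

text \<open>Tabulate n costed values into an array (later lookups cost 1 each).\<close>
definition tabc :: "nat \<Rightarrow> (nat \<Rightarrow> 'a::ring \<times> nat) \<Rightarrow> (nat \<Rightarrow> 'a) \<times> nat" where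
  "tabc n f = ((\<lambda>k. if k < n then fst (f k) else 0), (\<Sum>k<n. snd (f k)) + n)"

fun findc :: "nat \<Rightarrow> (nat \<Rightarrow> bool \<times> nat) \<Rightarrow> nat option \<times> nat" where
  "findc 0 P = (None, 1)"
| "findc (Suc n) P = (let (r, c) = findc n P; (b, c') = P n in
     (if r \<noteq> None then r else if b then Some n else None, c + c' + 1))"

text \<open>The correction algorithm: compare row sums of A(B1) with C'1 and column sums
of (1A)B with 1C' to locate the faulty row i and column j, then recompute C i j.
Returns ((i, j), corrected matrix) together with the total cost (including p*r for
writing out the output matrix).\<close>
definition correct_alg ::
  "nat \<Rightarrow> nat \<Rightarrow> nat \<Rightarrow> (nat \<Rightarrow> nat \<Rightarrow> 'a::ring) \<Rightarrow> (nat \<Rightarrow> nat \<Rightarrow> 'a) \<Rightarrow> (nat \<Rightarrow> nat \<Rightarrow> 'a)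
   \<Rightarrow> ((nat \<times> nat) \<times> (nat \<Rightarrow> nat \<Rightarrow> 'a)) \<times> nat" where
  "correct_alg p q r A B C' =
    (let (u, c1) = tabc q (\<lambda>k. sumc r (\<lambda>j. (B k j, 1)));
         (v, c2) = tabc q (\<lambda>k. sumc p (\<lambda>i. (A i k, 1)));
         (ri, c3) = findc p (\<lambda>i. let (x, a) = sumc q (\<lambda>k. (A i k * u k, 3));
                                     (y, b) = sumc r (\<lambda>j. (C' i j, 1))
                                 in (x \<noteq> y, a + b + 1));
         (cj, c4) = findc r (\<lambda>j. let (x, a) = sumc q (\<lambda>k. (v k * B k j, 3));
                                     (y, b) = sumc p (\<lambda>i. (C' i j, 1))
                                 in (x \<noteq> y, a + b + 1));
         i = the ri; j = the cj;
         (e, c5) = sumc q (\<lambda>k. (A i k * B k j, 3))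
     in (((i, j), (\<lambda>a b. if a = i \<and> b = j then e else C' a b)),
         c1 + c2 + c3 + c4 + c5 + p * r + 2))"

end

theory Submission imports Defs begin

text \<open>Multiplying by the all-ones vector gives the checksums A(B1) and (1A)B, which cost only
O(pq + qr) to compute. Since C' differs from AB in the single entry (i0, j0), its row sums agree
with A(B1) in every row except i0 and its column sums agree with (1A)B in every column
except j0; a linear scan finds both indices, and C i0 j0 is recomputed as one inner product.\<close>

lemma fst_sumc: "fst (sumc n f) = (\<Sum>k<n. fst (f k))"
  by (induction n) (auto simp: split_beta Let_def)

lemma snd_sumc: "snd (sumc n f) = 1 + (\<Sum>k<n. snd (f k) + 1)"
  by (induction n) (auto simp: split_beta Let_def)

lemma snd_findc: "snd (findc n P) = 1 + (\<Sum>k<n. snd (P k) + 1)"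
  by (induction n) (auto simp: split_beta Let_def)

lemma fst_findc:
  "fst (findc n P) = (if \<exists>i<n. fst (P i) then Some (LEAST i. fst (P i)) else None)"
proof (induction n)
  case 0
  then show ?case by simp
next
  case (Suc n)
  show ?case
  proof (cases "\<exists>i<n. fst (P i)")
    case True
    then show ?thesis using Suc by (auto simp: split_beta Let_def intro: less_SucI)
  next
    case False
    then have "(LEAST i. fst (P i)) = n" if "fst (P n)"
      using that by (intro Least_equality) (auto simp: not_less[symmetric])
    then show ?thesis using Suc False by (auto simp: split_beta Let_def less_Suc_eq)
  qed
qed

lemma fst_findc_unique:
  assumes unique: "\<And>i. i < n \<Longrightarrow> fst (P i) \<longleftrightarrow> i = i0" and "i0 < n"
  shows "fst (findc n P) = Some i0"
proof -
  have found: "fst (P i0)"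
    using assms by blast
  have "(LEAST i. fst (P i)) = i0"
  proof (rule Least_equality)
    show "i0 \<le> y" if "fst (P y)" for y
      using unique[of y] that \<open>i0 < n\<close> by (cases "y < n") auto
  qed (fact found)
  then show ?thesis
    using found \<open>i0 < n\<close> by (auto simp: fst_findc)
qed

lemma sum_lessThan_differ_iff:
  fixes X Y :: "nat \<Rightarrow> 'a::ab_group_add"
  assumes "\<And>j. j < n \<Longrightarrow> j \<noteq> j0 \<Longrightarrow> X j = Y j" and "j0 < n"
  shows "sum X {..<n} \<noteq> sum Y {..<n} \<longleftrightarrow> X j0 \<noteq> Y j0"
proof -
  have "sum X {..<n} - sum Y {..<n} = (\<Sum>j<n. X j - Y j)"
    by (simp add: sum_subtractf)
  also have "\<dots> = (\<Sum>j\<in>{j0}. X j - Y j)"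
    using assms by (intro sum.mono_neutral_right) auto
  also have "\<dots> = X j0 - Y j0"
    by simp
  finally show ?thesis by (metis eq_iff_diff_eq_0)
qed

lemma sum_lessThan_mult_guarded_right:
  "(\<Sum>k<n. f k * (if k < n then g k else 0)) = (\<Sum>k<n. f k * g k)"
  by (rule sum.cong) auto

lemma sum_lessThan_mult_guarded_left:
  "(\<Sum>k<n. (if k < n then g k else 0) * f k) = (\<Sum>k<n. g k * f k)"
  by (rule sum.cong) auto

lemma row_checksum:
  "(\<Sum>k<q. A i k * (\<Sum>j<r. B k j)) = (\<Sum>j<r. mat_mult q A B i j)"
  by (simp add: mat_mult_def sum_distrib_left sum.swap[of _ "{..<q}"])

lemma column_checksum:
  "(\<Sum>k<q. (\<Sum>i<p. A i k) * B k j) = (\<Sum>i<p. mat_mult q A B i j)"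
  by (simp add: mat_mult_def sum_distrib_right sum.swap[of _ "{..<q}"])

context
  fixes p q r :: nat and A B C' :: "nat \<Rightarrow> nat \<Rightarrow> 'a::ring" and i0 j0 :: nat
  assumes single_error: "\<And>i j. i < p \<Longrightarrow> j < r \<Longrightarrow>
      C' i j \<noteq> mat_mult q A B i j \<longleftrightarrow> i = i0 \<and> j = j0"
    and i0_less: "i0 < p" and j0_less: "j0 < r"
begin

lemma row_checksum_differs_iff:
  assumes "i < p"
  shows "(\<Sum>k<q. A i k * (\<Sum>j<r. B k j)) \<noteq> (\<Sum>j<r. C' i j) \<longleftrightarrow> i = i0"
proof -
  have "mat_mult q A B i j = C' i j" if "j < r" "j \<noteq> j0" for j
    using single_error[OF assms that(1)] that(2) by auto
  then have "(\<Sum>j<r. mat_mult q A B i j) \<noteq> (\<Sum>j<r. C' i j) \<longleftrightarrow> mat_mult q A B i j0 \<noteq> C' i j0"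
    using j0_less by (rule sum_lessThan_differ_iff)
  then show ?thesis
    unfolding row_checksum using single_error[OF assms j0_less] by metis
qed

lemma column_checksum_differs_iff:
  assumes "j < r"
  shows "(\<Sum>k<q. (\<Sum>i<p. A i k) * B k j) \<noteq> (\<Sum>i<p. C' i j) \<longleftrightarrow> j = j0"
proof -
  have "mat_mult q A B i j = C' i j" if "i < p" "i \<noteq> i0" for i
    using single_error[OF that(1) assms] that(2) by auto
  then have "(\<Sum>i<p. mat_mult q A B i j) \<noteq> (\<Sum>i<p. C' i j) \<longleftrightarrow> mat_mult q A B i0 j \<noteq> C' i0 j"
    using i0_less by (rule sum_lessThan_differ_iff)
  then show ?thesis
    unfolding column_checksum using single_error[OF i0_less assms] by metis
qed

lemma fst_correct_alg:
  "fst (correct_alg p q r A B C') =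
     ((i0, j0), \<lambda>a b. if a = i0 \<and> b = j0 then mat_mult q A B i0 j0 else C' a b)"
proof -
  have row: "fst (findc p (\<lambda>i. ((\<Sum>k<q. A i k * (\<Sum>j<r. B k j)) \<noteq> (\<Sum>j<r. C' i j), c i))) = Some i0"
    for c by (rule fst_findc_unique) (use row_checksum_differs_iff i0_less in auto)
  have col: "fst (findc r (\<lambda>j. ((\<Sum>k<q. (\<Sum>i<p. A i k) * B k j) \<noteq> (\<Sum>i<p. C' i j), c j))) = Some j0"
    for c by (rule fst_findc_unique) (use column_checksum_differs_iff j0_less in auto)
  show ?thesis
    unfolding correct_alg_def Let_def tabc_def
    apply (simp only: split_beta fst_conv snd_conv fst_sumc
        sum_lessThan_mult_guarded_right sum_lessThan_mult_guarded_left)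
    apply (simp only: row col option.sel)
    apply (simp add: mat_mult_def cong: if_cong)
    done
qed

end

lemma snd_correct_alg:
  "snd (correct_alg p q r A B C') =
     6 * (p * q) + 6 * (q * r) + 5 * (p * r) + 8 * q + 4 * p + 4 * r + 5"
  by (simp add: correct_alg_def Let_def split_beta tabc_def snd_sumc snd_findc algebra_simps)

lemma snd_correct_alg_le:
  assumes "0 < p" "0 < r"
  shows "snd (correct_alg p q r A B C') \<le> 20 * (p * q + q * r + p * r)"
proof -
  have "q \<le> p * q" "p \<le> p * r" "r \<le> p * r" "1 \<le> p * r"
    using assms by auto
  then show ?thesis
    unfolding snd_correct_alg distrib_left by linarith
qed

theorem theorem1:
  "\<exists>K::nat. \<forall>(p::nat) (q::nat) (r::nat) (A :: nat \<Rightarrow> nat \<Rightarrow> 'a::ring) B C'.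
     (\<exists>!ij. fst ij < p \<and> snd ij < r \<and> C' (fst ij) (snd ij) \<noteq> mat_mult q A B (fst ij) (snd ij))
     \<longrightarrow> (let ((ij, C), cost) = correct_alg p q r A B C' in
           fst ij < p \<and> snd ij < r \<and> C' (fst ij) (snd ij) \<noteq> mat_mult q A B (fst ij) (snd ij)
           \<and> (\<forall>i<p. \<forall>j<r. C i j = mat_mult q A B i j)
           \<and> cost \<le> K * (p * q + q * r + p * r))"
proof (intro exI allI impI)
  fix p q r :: nat and A B C' :: "nat \<Rightarrow> nat \<Rightarrow> 'a"
  assume "\<exists>!ij. fst ij < p \<and> snd ij < r \<and> C' (fst ij) (snd ij) \<noteq> mat_mult q A B (fst ij) (snd ij)"
  then obtain i0 j0 where i0: "i0 < p" and j0: "j0 < r"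
    and error: "C' i0 j0 \<noteq> mat_mult q A B i0 j0"
    and unique: "\<And>i j. i < p \<Longrightarrow> j < r \<Longrightarrow> C' i j \<noteq> mat_mult q A B i j \<Longrightarrow> (i, j) = (i0, j0)"
    by (metis fst_conv snd_conv)
  have single_error: "C' i j \<noteq> mat_mult q A B i j \<longleftrightarrow> i = i0 \<and> j = j0"
    if "i < p" "j < r" for i j
    using that error unique by blast
  define C where "C = (\<lambda>a b. if a = i0 \<and> b = j0 then mat_mult q A B i0 j0 else C' a b)"
  have "fst (correct_alg p q r A B C') = ((i0, j0), C)"
    unfolding C_def by (rule fst_correct_alg[OF single_error i0 j0])
  moreover have "C i j = mat_mult q A B i j" if "i < p" "j < r" for i j
    using single_error[OF that] by (auto simp: C_def)
  moreover have "snd (correct_alg p q r A B C') \<le> 20 * (p * q + q * r + p * r)"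
    using i0 j0 by (intro snd_correct_alg_le) auto
  ultimately show "let ((ij, C), cost) = correct_alg p q r A B C' in
      fst ij < p \<and> snd ij < r \<and> C' (fst ij) (snd ij) \<noteq> mat_mult q A B (fst ij) (snd ij)
      \<and> (\<forall>i<p. \<forall>j<r. C i j = mat_mult q A B i j)
      \<and> cost \<le> 20 * (p * q + q * r + p * r)"
    using i0 j0 error by (simp add: split_beta)
qed

end
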